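(* Let $c\in\mathbb{N}$, let $\delta>1/c$, and let $\mathrm{ALG}$ be a deterministic algorithm for the Halld\'orsson–Szegedy guessing game such that on inputs where $n=k^c$ the cost of $\mathrm{ALG}$ is at most $O(n^{1-\delta})$. Then $\mathrm{ALG}$ must read at least $b=\Omega(n\log n)$ bits of advice.
   Context: The Halld\'orsson–Szegedy guessing game (HSGG) is the following minimization problem. First integers $k\leq n$ with $k$ even are revealed. Then for $i=1,\dots,n$: a set $A_i\subseteq[k]$ of size $k/2$ (available characters) is revealed; the algorithm answers $y_i\in[n]$ subject to: for every $t<i$ with $y_t=y_i$, $x_t\in A_i$; then the correct character $x_i\in A_i$ is revealed. The cost of the output $y_1\cdots y_n$ is $|\{y_1,\dots,y_n\}|$. Advice is read from an infinite tape prepared by an oracle knowing the whole input. *)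

theory Defs
  imports Complex_Main
begin

type_synonym tape = "nat \<Rightarrow> bool"

text \<open>Given the advice tape,
  k, n, the revealed sets A_1..A_i (a list of length i) and the revealed characters
  x_1..x_{i-1} (a list of length i-1), it answers y_i. Onlineness is enforced by the type.\<close>
type_synonym hsgg_alg = "tape \<Rightarrow> nat \<Rightarrow> nat \<Rightarrow> nat set list \<Rightarrow> nat list \<Rightarrow> nat"

text \<open>An oracle prepares the tape knowing the whole input (k, n, As, xs).\<close>
type_synonym hsgg_oracle = "nat \<Rightarrow> nat \<Rightarrow> nat set list \<Rightarrow> nat list \<Rightarrow> tape"

definition hsgg_input :: "nat \<Rightarrow> nat \<Rightarrow> nat set list \<Rightarrow> nat list \<Rightarrow> bool" where
  "hsgg_input k n As xs \<longleftrightarrow> even k \<and> k \<le> n \<and> length As = n \<and> length xs = n \<and>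
     (\<forall>i<n. As ! i \<subseteq> {1..k} \<and> card (As ! i) = k div 2 \<and> xs ! i \<in> As ! i)"

definition hsgg_run :: "hsgg_alg \<Rightarrow> tape \<Rightarrow> nat \<Rightarrow> nat \<Rightarrow> nat set list \<Rightarrow> nat list \<Rightarrow> nat list" where
  "hsgg_run ALG \<phi> k n As xs = map (\<lambda>i. ALG \<phi> k n (take (Suc i) As) (take i xs)) [0..<n]"

definition hsgg_valid_output :: "nat \<Rightarrow> nat set list \<Rightarrow> nat list \<Rightarrow> nat list \<Rightarrow> bool" where
  "hsgg_valid_output n As xs ys \<longleftrightarrow> length ys = n \<and>
     (\<forall>i<n. ys ! i \<in> {1..n} \<and> (\<forall>t<i. ys ! t = ys ! i \<longrightarrow> xs ! t \<in> As ! i))"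

definition hsgg_cost :: "nat list \<Rightarrow> nat" where
  "hsgg_cost ys = card (set ys)"

text \<open>The run of ALG on the input with tape \<phi> only depends on (i.e. reads at most)
  the first b bits of \<phi>: every tape agreeing with \<phi> on positions < b yields the same run.
  (The number of bits actually read is at least the least such b.)\<close>
definition hsgg_determined_by :: "hsgg_alg \<Rightarrow> tape \<Rightarrow> nat \<Rightarrow> nat \<Rightarrow> nat \<Rightarrow> nat set list \<Rightarrow> nat list \<Rightarrow> bool" where
  "hsgg_determined_by ALG \<phi> b k n As xs \<longleftrightarrow>
     (\<forall>\<psi>. (\<forall>j<b. \<psi> j = \<phi> j) \<longrightarrow> hsgg_run ALG \<psi> k n As xs = hsgg_run ALG \<phi> k n As xs)"

end

theory Submission
  imports Defs "HOL-Real_Asymp.Real_Asymp" "HOL-Library.Log_Nat"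
begin

text \<open>
  Once the advice tape is fixed, the algorithm is a deterministic strategy, and it suffices to
  count the inputs such a strategy solves with cost at most \<open>m\<close>. Along a run consider the
  potential, the number of distinct pairs (guess, revealed character); it never exceeds \<open>m k\<close>
  and grows by at most one per round. In a round that leaves it unchanged the guess \<open>y\<close> is old,
  so the revealed character and all characters revealed earlier under \<open>y\<close> lie in the set \<open>A\<close>.
  A random \<open>k/2\<close>-subset of \<open>[k]\<close> contains a fixed \<open>d\<close>-set with probability at most
  \<open>2^-d\<close>, so with \<open>2^d \<ge> n\<close> only an \<open>O(log n / k)\<close> fraction of all rounds can do this.
  Hence one strategy solves at most a \<open>2^n k^(-(n - m k)/2)\<close> fraction of all inputs. Reading
  \<open>B\<close> advice bits selects one of \<open>2^B\<close> strategies, so \<open>B \<ge> (n - m k) log \<surd>k - n\<close>, which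
  is of order \<open>n log n\<close> when \<open>n = k^c\<close> and the cost \<open>m = O(n^(1-\<delta>))\<close> satisfies \<open>m k \<le> n/2\<close>.
\<close>

section \<open>Binomial estimates\<close>

lemma two_power_mult_choose_le:
  "s \<le> h \<Longrightarrow> 2 * h \<le> K \<Longrightarrow> 2 ^ s * ((K - s) choose (h - s)) \<le> K choose h"
proof (induction s arbitrary: K h)
  case (Suc s)
  have "K - Suc s = (K - 1) - s" "h - Suc s = (h - 1) - s" by simp_all
  moreover have "2 ^ s * ((K - 1 - s) choose (h - 1 - s)) \<le> (K - 1) choose (h - 1)"
    using Suc.prems by (intro Suc.IH) auto
  moreover have "2 * ((K - 1) choose (h - 1)) \<le> K choose h"
  proof -
    have "h * (2 * ((K - 1) choose (h - 1))) \<le> K * ((K - 1) choose (h - 1))"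
      using Suc.prems mult_le_mono1[of "2 * h" K]
      by (simp only: mult.assoc[symmetric] mult.commute[of h 2])
    also have "\<dots> = h * (K choose h)"
      using times_binomial_minus1_eq[of h K] Suc.prems by simp
    finally show ?thesis using Suc.prems by simp
  qed
  ultimately show ?case by simp
qed simp

lemma card_supersets_mult_two_power_le:
  assumes U: "finite U" "S \<subseteq> U" and h: "2 * h \<le> card U"
  shows "card {A. A \<subseteq> U \<and> card A = h \<and> S \<subseteq> A} * 2 ^ card S \<le> card U choose h"
proof (cases "card S \<le> h")
  case True
  have S: "finite S" using U finite_subset by blast
  have "bij_betw (\<lambda>A. A - S) {A. A \<subseteq> U \<and> card A = h \<and> S \<subseteq> A}
          {B. B \<subseteq> U - S \<and> card B = h - card S}"
  proof (rule bij_betw_imageI)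
    show "inj_on (\<lambda>A. A - S) {A. A \<subseteq> U \<and> card A = h \<and> S \<subseteq> A}"
      by (rule inj_onI) blast
    show "(\<lambda>A. A - S) ` {A. A \<subseteq> U \<and> card A = h \<and> S \<subseteq> A} = {B. B \<subseteq> U - S \<and> card B = h - card S}"
    proof (intro equalityI subsetI)
      fix B assume "B \<in> (\<lambda>A. A - S) ` {A. A \<subseteq> U \<and> card A = h \<and> S \<subseteq> A}"
      then show "B \<in> {B. B \<subseteq> U - S \<and> card B = h - card S}"
        using U S by (auto simp: card_Diff_subset)
    next
      fix B assume "B \<in> {B. B \<subseteq> U - S \<and> card B = h - card S}"
      moreover from this have "card (B \<union> S) = h"
        using True S U by (subst card_Un_disjoint) (auto intro: finite_subset)
      ultimately show "B \<in> (\<lambda>A. A - S) ` {A. A \<subseteq> U \<and> card A = h \<and> S \<subseteq> A}"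
        using U by (intro image_eqI[of _ _ "B \<union> S"]) auto
    qed
  qed
  then have "card {A. A \<subseteq> U \<and> card A = h \<and> S \<subseteq> A} = (card U - card S) choose (h - card S)"
    using U S by (simp add: bij_betw_same_card n_subsets card_Diff_subset)
  then show ?thesis
    using two_power_mult_choose_le[OF True] h by (simp add: mult.commute)
next
  case False
  then have "{A. A \<subseteq> U \<and> card A = h \<and> S \<subseteq> A} = {}"
    using U by (auto dest: card_mono[OF finite_subset])
  then show ?thesis by (metis card.empty mult_is_0 zero_le)
qed

lemma card_Sigma_const_card:
  assumes "finite F" "\<And>A. A \<in> F \<Longrightarrow> finite A \<and> card A = h"
  shows "card (SIGMA A:F. A) = card F * h"
  using assms by (simp add: card_SigmaI)

lemma card_Sigma_supersets_le:
  assumes "S \<subseteq> {1..k}" "2 * h \<le> k" "d \<le> card S"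
  shows "card (SIGMA A:{A. A \<subseteq> {1..k} \<and> card A = h \<and> S \<subseteq> A}. A) \<le> (k choose h) / 2 ^ d * h"
proof -
  let ?F = "{A. A \<subseteq> {1..k} \<and> card A = h \<and> S \<subseteq> A}"
  have "card ?F * 2 ^ d \<le> card ?F * 2 ^ card S"
    using assms(3) by simp
  also have "\<dots> \<le> k choose h"
    using card_supersets_mult_two_power_le[of "{1..k}" S h] assms(1,2) by simp
  finally have "real (card ?F * 2 ^ d) \<le> k choose h"
    by (simp only: of_nat_le_iff)
  then have "card ?F \<le> (k choose h) / 2 ^ d"
    by (simp add: field_simps)
  moreover have "card (SIGMA A:?F. A) = card ?F * h"
    by (intro card_Sigma_const_card) (auto intro: finite_subset[of _ "Pow {1..k}"] finite_subset)
  ultimately show ?thesis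
    using mult_right_mono[of "card ?F" "(k choose h) / 2 ^ d" "real h"] by simp
qed

section \<open>Counting sequences by a potential\<close>

definition continuations :: "'a set \<Rightarrow> ('a list \<Rightarrow> bool) \<Rightarrow> nat \<Rightarrow> 'a list \<Rightarrow> 'a list set" where
  "continuations R P L ps = {qs. length qs = L \<and> set qs \<subseteq> R \<and> P (ps @ qs)}"

lemma finite_continuations: "finite R \<Longrightarrow> finite (continuations R P L ps)"
  by (rule finite_subset[OF _ finite_lists_length_eq[of R L]]) (auto simp: continuations_def)

lemma card_continuations_Suc_le:
  assumes "finite R" and prefix_closed: "\<And>ps p. P (ps @ [p]) \<Longrightarrow> P ps"
  shows "card (continuations R P (Suc L) ps)
           \<le> (\<Sum>p \<in> {p \<in> R. P (ps @ [p])}. card (continuations R P L (ps @ [p])))"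
proof -
  have P_append: "P (xs @ ys) \<Longrightarrow> P xs" for xs ys
    by (induction ys rule: rev_induct) (auto dest: prefix_closed simp flip: append_assoc)
  have "continuations R P (Suc L) ps
          \<subseteq> (\<Union>p \<in> {p \<in> R. P (ps @ [p])}. (#) p ` continuations R P L (ps @ [p]))"
  proof
    fix qs assume "qs \<in> continuations R P (Suc L) ps"
    then obtain p qs' where "qs = p # qs'" "p \<in> R" "qs' \<in> continuations R P L (ps @ [p])"
      by (cases qs) (auto simp: continuations_def)
    with P_append[of "ps @ [p]" qs']
    show "qs \<in> (\<Union>p \<in> {p \<in> R. P (ps @ [p])}. (#) p ` continuations R P L (ps @ [p]))"
      by (auto simp: continuations_def)
  qed
  then have "card (continuations R P (Suc L) ps)
               \<le> card (\<Union>p \<in> {p \<in> R. P (ps @ [p])}. (#) p ` continuations R P L (ps @ [p]))"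
    using assms(1) by (intro card_mono) (auto intro: finite_continuations)
  also have "\<dots> \<le> (\<Sum>p \<in> {p \<in> R. P (ps @ [p])}. card ((#) p ` continuations R P L (ps @ [p])))"
    using assms(1) by (intro card_UN_le) auto
  also have "\<dots> \<le> (\<Sum>p \<in> {p \<in> R. P (ps @ [p])}. card (continuations R P L (ps @ [p])))"
    by (intro sum_mono card_image_le finite_continuations assms(1))
  finally show ?thesis .
qed

text \<open>
  Each further element either keeps \<open>\<Phi>\<close>, in at most \<open>a\<close> ways, or raises it, in at most
  \<open>card R = a \<cdot> (card R / a)\<close> ways but only \<open>M - \<Phi> ps\<close> more times.
\<close>

lemma card_continuations_potential_le:
  fixes \<Phi> :: "'a list \<Rightarrow> nat" and a :: real
  assumes R: "finite R" and a: "0 < a" "a \<le> card R"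
    and prefix_closed: "\<And>ps p. P (ps @ [p]) \<Longrightarrow> P ps"
    and potential_step: "\<And>ps p. \<Phi> (ps @ [p]) \<in> {\<Phi> ps, Suc (\<Phi> ps)}"
    and potential_le: "\<And>ps. P ps \<Longrightarrow> set ps \<subseteq> R \<Longrightarrow> \<Phi> ps \<le> M"
    and few_stalling: "\<And>ps. P ps \<Longrightarrow> set ps \<subseteq> R \<Longrightarrow>
           card {p \<in> R. P (ps @ [p]) \<and> \<Phi> (ps @ [p]) = \<Phi> ps} \<le> a"
    and "P ps" "set ps \<subseteq> R"
  shows "card (continuations R P L ps) \<le> (2 * a) ^ L * (card R / a) ^ (M - \<Phi> ps)"
  using assms(8,9)
proof (induction L arbitrary: ps)
  case 0
  have "continuations R P 0 ps \<subseteq> {[]}" by (auto simp: continuations_def)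
  then have "card (continuations R P 0 ps) \<le> card {[] :: 'a list}"
    by (intro card_mono) simp_all
  moreover have "1 \<le> (card R / a) ^ (M - \<Phi> ps)"
    using a by (intro one_le_power) simp
  ultimately show ?case by simp
next
  case (Suc L)
  define r where "r = \<Phi> ps"
  define F where "F s = (2 * a) ^ L * (card R / a) ^ (M - s)" for s
  define Stall where "Stall = {p \<in> R. P (ps @ [p]) \<and> \<Phi> (ps @ [p]) = r}"
  define Grow where "Grow = {p \<in> R. P (ps @ [p]) \<and> \<Phi> (ps @ [p]) = Suc r}"
  let ?c = "\<lambda>p. real (card (continuations R P L (ps @ [p])))"
  have F_nonneg: "0 \<le> F s" for s using a by (simp add: F_def)
  have IH: "?c p \<le> F (\<Phi> (ps @ [p]))" if "p \<in> R" "P (ps @ [p])" for p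
    using Suc.IH[of "ps @ [p]"] that Suc.prems by (simp add: F_def)
  have "{p \<in> R. P (ps @ [p])} = Stall \<union> Grow" "Stall \<inter> Grow = {}"
    using potential_step by (auto simp: Stall_def Grow_def r_def)
  moreover have "finite Stall" "finite Grow" using R by (simp_all add: Stall_def Grow_def)
  moreover have "card (continuations R P (Suc L) ps)
                   \<le> (\<Sum>p \<in> {p \<in> R. P (ps @ [p])}. card (continuations R P L (ps @ [p])))"
    using R prefix_closed by (rule card_continuations_Suc_le)
  ultimately have split: "card (continuations R P (Suc L) ps) \<le> sum ?c Stall + sum ?c Grow"
    by (simp flip: of_nat_sum add: sum.union_disjoint)
  have stall: "sum ?c Stall \<le> a * F r"
  proof -
    have "sum ?c Stall \<le> (\<Sum>p \<in> Stall. F r)"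
      using IH by (intro sum_mono) (force simp: Stall_def)
    also have "\<dots> = card Stall * F r" by simp
    also have "\<dots> \<le> a * F r"
      using few_stalling[OF Suc.prems] F_nonneg
      by (intro mult_right_mono) (simp_all add: Stall_def r_def)
    finally show ?thesis .
  qed
  have grow: "sum ?c Grow \<le> a * F r"
  proof (cases "Grow = {}")
    case False
    then obtain p where "p \<in> Grow" by blast
    then have "Suc r \<le> M" using potential_le[of "ps @ [p]"] Suc.prems by (auto simp: Grow_def)
    then have "M - r = Suc (M - Suc r)" by simp
    then have F_Suc: "card R * F (Suc r) = a * F r"
      using a by (simp add: F_def)
    have "sum ?c Grow \<le> (\<Sum>p \<in> Grow. F (Suc r))"
      using IH by (intro sum_mono) (force simp: Grow_def)
    also have "\<dots> = card Grow * F (Suc r)" by simp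
    also have "\<dots> \<le> card R * F (Suc r)"
      using F_nonneg R by (intro mult_right_mono) (auto simp: Grow_def intro: card_mono)
    finally show ?thesis using F_Suc by simp
  next
    case True
    then show ?thesis using a F_nonneg[of r] by simp
  qed
  have "card (continuations R P (Suc L) ps) \<le> 2 * a * F r"
    using split stall grow by linarith
  then show ?case by (simp add: F_def r_def)
qed

section \<open>Runs of a fixed strategy\<close>

text \<open>
  An input is a list of rounds \<open>(A\<^sub>i, x\<^sub>i)\<close>; a strategy is the algorithm with tape, \<open>k\<close>
  and \<open>n\<close> fixed, answering from the sets and characters revealed so far.
\<close>

type_synonym strategy = "nat set list \<Rightarrow> nat list \<Rightarrow> nat"

definition rounds :: "nat \<Rightarrow> nat \<Rightarrow> (nat set \<times> nat) set" where
  "rounds k h = {(A, x). A \<subseteq> {1..k} \<and> card A = h \<and> x \<in> A}"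

definition answers :: "strategy \<Rightarrow> (nat set \<times> nat) list \<Rightarrow> nat list" where
  "answers g ps = map (\<lambda>i. g (map fst (take (Suc i) ps)) (map snd (take i ps))) [0..<length ps]"

definition next_answer :: "strategy \<Rightarrow> (nat set \<times> nat) list \<Rightarrow> nat set \<Rightarrow> nat" where
  "next_answer g ps A = g (map fst ps @ [A]) (map snd ps)"

definition solves_within :: "strategy \<Rightarrow> nat \<Rightarrow> (nat set \<times> nat) list \<Rightarrow> bool" where
  "solves_within g m ps \<longleftrightarrow>
     (\<forall>i < length ps. \<forall>t < i. answers g ps ! t = answers g ps ! i \<longrightarrow> snd (ps ! t) \<in> fst (ps ! i))
     \<and> card (set (answers g ps)) \<le> m"

definition potential :: "strategy \<Rightarrow> (nat set \<times> nat) list \<Rightarrow> nat" where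
  "potential g ps = card (set (zip (answers g ps) (map snd ps)))"

definition stalling_rounds ::
  "strategy \<Rightarrow> nat \<Rightarrow> nat \<Rightarrow> nat \<Rightarrow> (nat set \<times> nat) list \<Rightarrow> (nat set \<times> nat) set" where
  "stalling_rounds g m k h ps =
     {p \<in> rounds k h. solves_within g m (ps @ [p]) \<and> potential g (ps @ [p]) = potential g ps}"

definition seen :: "strategy \<Rightarrow> (nat set \<times> nat) list \<Rightarrow> nat \<Rightarrow> nat set" where
  "seen g ps y = {snd (ps ! t) | t. t < length ps \<and> answers g ps ! t = y}"

lemma finite_rounds: "finite (rounds k h)"
  by (rule finite_subset[of _ "Pow {1..k} \<times> {1..k}"]) (auto simp: rounds_def)

lemma card_rounds: "card (rounds k h) = (k choose h) * h"
proof -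
  have "card (rounds k h) = card (SIGMA A:{A. A \<subseteq> {1..k} \<and> card A = h}. A)"
    by (rule arg_cong[where f = card]) (auto simp: rounds_def)
  also have "\<dots> = card {A. A \<subseteq> {1..k} \<and> card A = h} * h"
    by (rule card_Sigma_const_card) (auto intro: finite_subset)
  finally show ?thesis by (simp add: n_subsets)
qed

lemma length_answers [simp]: "length (answers g ps) = length ps"
  by (simp add: answers_def)

lemma nth_answers:
  "i < length ps \<Longrightarrow> answers g ps ! i = g (map fst (take (Suc i) ps)) (map snd (take i ps))"
  by (simp add: answers_def)

lemma answers_snoc: "answers g (ps @ [(A, x)]) = answers g ps @ [next_answer g ps A]"
  by (rule nth_equalityI) (auto simp: nth_answers nth_append less_Suc_eq next_answer_def)

lemma solves_within_nthD:
  assumes "solves_within g m ps" "t < i" "i < length ps" "answers g ps ! t = answers g ps ! i"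
  shows "snd (ps ! t) \<in> fst (ps ! i)"
  using assms unfolding solves_within_def by blast

lemma solves_within_snocD:
  assumes "solves_within g m (ps @ [(A, x)])"
  shows "solves_within g m ps"
  unfolding solves_within_def
proof (intro conjI allI impI)
  fix i t assume "i < length ps" "t < i" "answers g ps ! t = answers g ps ! i"
  then have "answers g (ps @ [(A, x)]) ! t = answers g (ps @ [(A, x)]) ! i"
    by (simp add: answers_snoc nth_append)
  then have "snd ((ps @ [(A, x)]) ! t) \<in> fst ((ps @ [(A, x)]) ! i)"
    using solves_within_nthD[OF assms] \<open>i < length ps\<close> \<open>t < i\<close> by simp
  then show "snd (ps ! t) \<in> fst (ps ! i)"
    using \<open>i < length ps\<close> \<open>t < i\<close> by (simp add: nth_append)
next
  have "card (set (answers g ps)) \<le> card (set (answers g (ps @ [(A, x)])))"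
    by (simp add: answers_snoc card_insert_le)
  then show "card (set (answers g ps)) \<le> m"
    using assms by (simp add: solves_within_def)
qed

lemma potential_snoc:
  "potential g (ps @ [(A, x)]) =
     (if (next_answer g ps A, x) \<in> set (zip (answers g ps) (map snd ps))
      then potential g ps else Suc (potential g ps))"
  by (simp add: potential_def answers_snoc insert_absorb)

lemma potential_le:
  assumes "solves_within g m ps" "set ps \<subseteq> rounds k h"
  shows "potential g ps \<le> m * k"
proof -
  have "set (zip (answers g ps) (map snd ps)) \<subseteq> set (answers g ps) \<times> {1..k}"
  proof
    fix z assume "z \<in> set (zip (answers g ps) (map snd ps))"
    then obtain i where i: "i < length ps" "z = (answers g ps ! i, snd (ps ! i))"
      by (auto simp: set_zip)
    moreover have "ps ! i \<in> rounds k h" using assms(2) i(1) nth_mem by blast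
    ultimately show "z \<in> set (answers g ps) \<times> {1..k}"
      by (auto simp: rounds_def split: prod.splits)
  qed
  then have "potential g ps \<le> card (set (answers g ps) \<times> {1..k})"
    unfolding potential_def by (intro card_mono) auto
  also have "\<dots> \<le> m * k"
    using assms(1) by (simp add: card_cartesian_product solves_within_def)
  finally show ?thesis .
qed

lemma seen_subset:
  assumes "set ps \<subseteq> rounds k h"
  shows "seen g ps y \<subseteq> {1..k}"
proof
  fix z assume "z \<in> seen g ps y"
  then obtain t where t: "t < length ps" "z = snd (ps ! t)" by (auto simp: seen_def)
  moreover have "ps ! t \<in> rounds k h" using assms t(1) nth_mem by blast
  ultimately show "z \<in> {1..k}" by (auto simp: rounds_def split: prod.splits)
qed

lemma stalling_round_seen:
  assumes solves: "solves_within g m (ps @ [(A, x)])"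
    and stall: "potential g (ps @ [(A, x)]) = potential g ps"
  shows "x \<in> seen g ps (next_answer g ps A)" "seen g ps (next_answer g ps A) \<subseteq> A"
proof -
  have "(next_answer g ps A, x) \<in> set (zip (answers g ps) (map snd ps))"
    using stall by (simp add: potential_snoc split: if_splits)
  then show "x \<in> seen g ps (next_answer g ps A)"
    by (auto simp: set_zip seen_def)
  show "seen g ps (next_answer g ps A) \<subseteq> A"
  proof
    fix z assume "z \<in> seen g ps (next_answer g ps A)"
    then obtain t where
      t: "t < length ps" "answers g ps ! t = next_answer g ps A" "z = snd (ps ! t)"
      by (auto simp: seen_def)
    then have same: "answers g (ps @ [(A, x)]) ! t = answers g (ps @ [(A, x)]) ! length ps"
      by (simp add: answers_snoc nth_append)
    then have "snd ((ps @ [(A, x)]) ! t) \<in> fst ((ps @ [(A, x)]) ! length ps)"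
      using solves_within_nthD[OF solves t(1) _ same] by simp
    then show "z \<in> A" using t by (simp add: nth_append)
  qed
qed

text \<open>
  A stalling round \<open>(A, x)\<close> reuses a guess \<open>y\<close>: either fewer than \<open>d\<close> characters were
  revealed under \<open>y\<close> (and \<open>x\<close> is one of them), or \<open>A\<close> contains at least \<open>d\<close> of them.
\<close>

lemma stalling_rounds_subset:
  "stalling_rounds g m k h ps \<subseteq>
     (SIGMA A:{A. A \<subseteq> {1..k} \<and> card A = h}.
        if card (seen g ps (next_answer g ps A)) < d then seen g ps (next_answer g ps A) else {})
     \<union> (\<Union>y \<in> {y \<in> set (answers g ps). d \<le> card (seen g ps y)}.
          SIGMA A:{A. A \<subseteq> {1..k} \<and> card A = h \<and> seen g ps y \<subseteq> A}. A)"
proof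
  fix p assume p: "p \<in> stalling_rounds g m k h ps"
  obtain A x where Ax: "p = (A, x)" by fastforce
  let ?y = "next_answer g ps A"
  have A: "A \<subseteq> {1..k}" "card A = h" and x: "x \<in> seen g ps ?y" and y: "seen g ps ?y \<subseteq> A"
    using p stalling_round_seen[of g m ps A x] by (auto simp: Ax stalling_rounds_def rounds_def)
  from x obtain t where "t < length ps" "answers g ps ! t = ?y"
    by (auto simp: seen_def)
  then have "?y \<in> set (answers g ps)"
    by (metis length_answers nth_mem)
  then show "p \<in> (SIGMA A:{A. A \<subseteq> {1..k} \<and> card A = h}.
        if card (seen g ps (next_answer g ps A)) < d then seen g ps (next_answer g ps A) else {})
     \<union> (\<Union>y \<in> {y \<in> set (answers g ps). d \<le> card (seen g ps y)}.
          SIGMA A:{A. A \<subseteq> {1..k} \<and> card A = h \<and> seen g ps y \<subseteq> A}. A)"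
    using A x y by (cases "card (seen g ps ?y) < d") (auto simp: Ax)
qed

lemma card_stalling_rounds_le:
  assumes solves: "solves_within g m ps" and ps: "set ps \<subseteq> rounds k h" and hk: "2 * h \<le> k"
  shows "card (stalling_rounds g m k h ps) \<le> real (k choose h) * (d + m * h / 2 ^ d)"
proof -
  define Q where "Q = {A. A \<subseteq> {1..k} \<and> card A = h}"
  let ?S = "\<lambda>A. seen g ps (next_answer g ps A)"
  define Y where "Y = {y \<in> set (answers g ps). d \<le> card (seen g ps y)}"
  define Sup where "Sup y = {A. A \<subseteq> {1..k} \<and> card A = h \<and> seen g ps y \<subseteq> A}" for y
  define Small where "Small = (SIGMA A:Q. if card (?S A) < d then ?S A else {})"
  define Large where "Large = (\<Union>y \<in> Y. SIGMA A:Sup y. A)"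
  have finite_seen: "finite (seen g ps y)" for y
    using seen_subset[OF ps] finite_subset by blast
  have Q: "finite Q" "card Q = k choose h"
    by (simp_all add: Q_def n_subsets)
  have "stalling_rounds g m k h ps \<subseteq> Small \<union> Large"
    using stalling_rounds_subset[of g m k h ps d]
    by (simp add: Small_def Large_def Q_def Y_def Sup_def)
  moreover have "finite Small"
    unfolding Small_def using Q(1) finite_seen by (intro finite_SigmaI) auto
  moreover have "finite Large"
    unfolding Large_def Y_def Sup_def
    by (intro finite_UN_I finite_SigmaI) (auto intro: finite_subset)
  ultimately have union: "card (stalling_rounds g m k h ps) \<le> card Small + card Large"
    by (meson card_Un_le card_mono finite_UnI order_trans)
  have small: "card Small \<le> card Q * d"
  proof -
    have "card Small = (\<Sum>A \<in> Q. card (if card (?S A) < d then ?S A else {}))"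
      unfolding Small_def using Q finite_seen by (simp add: card_SigmaI)
    also have "\<dots> \<le> (\<Sum>A \<in> Q. d)" by (intro sum_mono) auto
    finally show ?thesis by simp
  qed
  have "card Large \<le> (\<Sum>y \<in> Y. card (SIGMA A:Sup y. A))"
    unfolding Large_def by (intro card_UN_le) (simp add: Y_def)
  then have "real (card Large) \<le> (\<Sum>y \<in> Y. real (card (SIGMA A:Sup y. A)))"
    by (simp flip: of_nat_sum)
  also have "\<dots> \<le> card Y * (card Q / 2 ^ d * h)"
    using sum_mono[of Y "\<lambda>y. real (card (SIGMA A:Sup y. A))" "\<lambda>_. card Q / 2 ^ d * h"]
      card_Sigma_supersets_le[OF seen_subset[OF ps] hk] by (simp add: Q Y_def Sup_def)
  also have "\<dots> \<le> m * (card Q / 2 ^ d * h)"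
  proof (intro mult_right_mono)
    have "card Y \<le> card (set (answers g ps))" by (intro card_mono) (auto simp: Y_def)
    then show "real (card Y) \<le> m" using solves by (simp add: solves_within_def)
  qed simp
  finally have large: "card Large \<le> m * (card Q / 2 ^ d * h)" .
  have "real (k choose h) * (d + m * h / 2 ^ d) = card Q * d + m * (card Q / 2 ^ d * h)"
    using Q by (simp add: field_simps)
  then show ?thesis
    using of_nat_mono[where 'a = real, OF union] of_nat_mono[where 'a = real, OF small] large
    by (simp only: of_nat_add of_nat_mult)
qed

lemma card_solved_inputs_le:
  assumes hk: "2 * h \<le> k" and mh: "m * h \<le> 2 ^ d" and dh: "d + 1 \<le> h"
  shows "card (continuations (rounds k h) (solves_within g m) n [])
           \<le> (2 * (real (k choose h) * (real d + 1))) ^ n * (h / (real d + 1)) ^ (m * k)"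
proof -
  define a where "a = real (k choose h) * (real d + 1)"
  have "0 < k choose h" using hk by simp
  then have a: "0 < a" "a \<le> card (rounds k h)"
    using dh by (simp_all add: a_def card_rounds)
  have q: "card (rounds k h) / a = h / (real d + 1)"
    using \<open>0 < k choose h\<close> by (simp add: a_def card_rounds)
  have "card (continuations (rounds k h) (solves_within g m) n [])
          \<le> (2 * a) ^ n * (card (rounds k h) / a) ^ (m * k - potential g [])"
  proof (rule card_continuations_potential_le[OF finite_rounds a])
    show "solves_within g m ps" if "solves_within g m (ps @ [p])" for ps p
      using that by (cases p) (simp add: solves_within_snocD)
    show "potential g (ps @ [p]) \<in> {potential g ps, Suc (potential g ps)}" for ps p
      by (cases p) (simp add: potential_snoc)
    show "potential g ps \<le> m * k" if "solves_within g m ps" "set ps \<subseteq> rounds k h" for ps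
      using that by (rule potential_le)
    show "card {p \<in> rounds k h. solves_within g m (ps @ [p]) \<and>
        potential g (ps @ [p]) = potential g ps} \<le> a"
      if "solves_within g m ps" "set ps \<subseteq> rounds k h" for ps
    proof -
      have "real m * h \<le> 2 ^ d"
        using mh by (metis of_nat_le_iff of_nat_mult of_nat_numeral of_nat_power)
      then have "real m * h / 2 ^ d \<le> 1" by simp
      then have "real (k choose h) * (d + real m * h / 2 ^ d) \<le> a"
        unfolding a_def by (intro mult_left_mono) simp_all
      then show ?thesis
        using card_stalling_rounds_le[OF that hk, of d] by (simp add: stalling_rounds_def)
    qed
  qed (simp_all add: solves_within_def answers_def)
  then show ?thesis unfolding q by (simp add: a_def potential_def answers_def ac_simps)
qed

section \<open>Advice\<close>

lemma hsgg_determined_by_mono: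
  "hsgg_determined_by ALG \<phi> b k n As xs \<Longrightarrow> b \<le> b' \<Longrightarrow> hsgg_determined_by ALG \<phi> b' k n As xs"
  unfolding hsgg_determined_by_def by (meson order_less_le_trans)

definition solves_with_advice :: "hsgg_alg \<Rightarrow> hsgg_oracle \<Rightarrow> nat \<Rightarrow> nat \<Rightarrow> nat \<Rightarrow> nat \<Rightarrow> bool" where
  "solves_with_advice ALG adv k n m B \<longleftrightarrow> (\<forall>As xs. hsgg_input k n As xs \<longrightarrow>
     hsgg_valid_output n As xs (hsgg_run ALG (adv k n As xs) k n As xs) \<and>
     hsgg_cost (hsgg_run ALG (adv k n As xs) k n As xs) \<le> m \<and>
     hsgg_determined_by ALG (adv k n As xs) B k n As xs)"

text \<open>
  A run reading at most \<open>B\<close> bits coincides with the run on the tape truncated after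
  position \<open>B\<close>; these truncations are the short tapes.
\<close>

definition short_tapes :: "nat \<Rightarrow> tape set" where
  "short_tapes B = (\<lambda>S j. j \<in> S) ` Pow {..<B}"

lemma finite_short_tapes: "finite (short_tapes B)"
  by (simp add: short_tapes_def)

lemma card_short_tapes: "card (short_tapes B) \<le> 2 ^ B"
  unfolding short_tapes_def using card_image_le[of "Pow {..<B}" "\<lambda>S j. j \<in> S"]
  by (simp add: card_Pow)

lemma hsgg_run_eq_answers:
  "length ps = n \<Longrightarrow> hsgg_run ALG \<phi> k n (map fst ps) (map snd ps) = answers (ALG \<phi> k n) ps"
  by (simp add: hsgg_run_def answers_def take_map)

lemma hsgg_input_rounds:
  assumes "even k" "k \<le> n" "length ps = n" "set ps \<subseteq> rounds k (k div 2)"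
  shows "hsgg_input k n (map fst ps) (map snd ps)"
  unfolding hsgg_input_def
proof (intro conjI allI impI)
  fix i assume "i < n"
  then have "ps ! i \<in> rounds k (k div 2)" using assms(3,4) nth_mem by blast
  then show "map fst ps ! i \<subseteq> {1..k}" "card (map fst ps ! i) = k div 2"
    "map snd ps ! i \<in> map fst ps ! i"
    using \<open>i < n\<close> assms(3) by (auto simp: rounds_def split: prod.splits)
qed (use assms in auto)

lemma solved_with_short_tape:
  assumes adv: "solves_with_advice ALG adv k n m B"
    and ps: "length ps = n" "hsgg_input k n (map fst ps) (map snd ps)"
  shows "\<exists>\<tau> \<in> short_tapes B. solves_within (ALG \<tau> k n) m ps"
proof
  define \<phi> where "\<phi> = adv k n (map fst ps) (map snd ps)"
  define \<tau> where "\<tau> j = (j < B \<and> \<phi> j)" for j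
  show "\<tau> \<in> short_tapes B"
    unfolding short_tapes_def by (rule image_eqI[of _ _ "{j. j < B \<and> \<phi> j}"]) (auto simp: \<tau>_def)
  have "hsgg_determined_by ALG \<phi> B k n (map fst ps) (map snd ps)"
    using adv[unfolded solves_with_advice_def, rule_format, OF ps(2)] by (simp add: \<phi>_def)
  then have "(\<forall>j<B. \<tau> j = \<phi> j) \<longrightarrow>
      hsgg_run ALG \<tau> k n (map fst ps) (map snd ps) = hsgg_run ALG \<phi> k n (map fst ps) (map snd ps)"
    unfolding hsgg_determined_by_def by blast
  then have "answers (ALG \<tau> k n) ps = hsgg_run ALG \<phi> k n (map fst ps) (map snd ps)"
    by (simp add: \<tau>_def hsgg_run_eq_answers[OF ps(1)])
  moreover have
    "hsgg_valid_output n (map fst ps) (map snd ps) (hsgg_run ALG \<phi> k n (map fst ps) (map snd ps))"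
    "hsgg_cost (hsgg_run ALG \<phi> k n (map fst ps) (map snd ps)) \<le> m"
    using adv[unfolded solves_with_advice_def, rule_format, OF ps(2)] by (simp_all add: \<phi>_def)
  ultimately show "solves_within (ALG \<tau> k n) m ps"
    by (simp add: solves_within_def hsgg_valid_output_def hsgg_cost_def ps(1))
qed

lemma card_inputs_le_short_tapes:
  assumes k: "even k" "k \<le> n" and d: "m * (k div 2) \<le> 2 ^ d" "d + 1 \<le> k div 2"
    and adv: "solves_with_advice ALG adv k n m B"
  shows "real (card (rounds k (k div 2))) ^ n
           \<le> 2 ^ B * ((2 * (real (k choose (k div 2)) * (real d + 1))) ^ n *
                       (real (k div 2) / (real d + 1)) ^ (m * k))"
    (is "_ \<le> 2 ^ B * ?bound")
proof -
  let ?R = "rounds k (k div 2)"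
  let ?solved = "\<lambda>\<tau>. continuations ?R (solves_within (ALG \<tau> k n) m) n []"
  have "continuations ?R (\<lambda>_. True) n [] \<subseteq> (\<Union>\<tau> \<in> short_tapes B. ?solved \<tau>)"
  proof
    fix ps assume ps: "ps \<in> continuations ?R (\<lambda>_. True) n []"
    then have "hsgg_input k n (map fst ps) (map snd ps)"
      using k by (intro hsgg_input_rounds) (auto simp: continuations_def)
    then obtain \<tau> where "\<tau> \<in> short_tapes B" "solves_within (ALG \<tau> k n) m ps"
      using solved_with_short_tape[OF adv] ps by (auto simp: continuations_def)
    then show "ps \<in> (\<Union>\<tau> \<in> short_tapes B. ?solved \<tau>)"
      using ps by (auto simp: continuations_def)
  qed
  then have "card (continuations ?R (\<lambda>_. True) n []) \<le> card (\<Union>\<tau> \<in> short_tapes B. ?solved \<tau>)"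
    by (intro card_mono) (simp_all add: finite_short_tapes finite_continuations finite_rounds)
  also have "\<dots> \<le> (\<Sum>\<tau> \<in> short_tapes B. card (?solved \<tau>))"
    by (rule card_UN_le[OF finite_short_tapes])
  finally have "card ?R ^ n \<le> (\<Sum>\<tau> \<in> short_tapes B. card (?solved \<tau>))"
    using card_lists_length_eq[OF finite_rounds] by (simp add: continuations_def conj_commute)
  then have "real (card ?R ^ n) \<le> real (\<Sum>\<tau> \<in> short_tapes B. card (?solved \<tau>))"
    by (simp only: of_nat_le_iff)
  then have "real (card ?R) ^ n \<le> (\<Sum>\<tau> \<in> short_tapes B. real (card (?solved \<tau>)))"
    by simp
  also have "\<dots> \<le> (\<Sum>\<tau> \<in> short_tapes B. ?bound)"
    using card_solved_inputs_le[of "k div 2" k m d] d k(1) by (intro sum_mono) simp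
  also have "\<dots> \<le> 2 ^ B * ?bound"
    using card_short_tapes[of B] by (simp add: mult_right_mono flip: of_nat_le_iff)
  finally show ?thesis .
qed

lemma sqrt_power_le_advice:
  assumes k: "even k" "k \<le> n" and mk: "m * k \<le> n"
    and d: "m * (k div 2) \<le> 2 ^ d" "2 * (real d + 1) \<le> sqrt k"
    and adv: "solves_with_advice ALG adv k n m B"
  shows "sqrt k ^ (n - m * k) \<le> 2 ^ (B + n)"
proof -
  define h where "h = k div 2"
  define a where "a = real (k choose h) * (real d + 1)"
  define q where "q = real h / (real d + 1)"
  have h: "real h = k / 2" using k(1) by (simp add: h_def real_of_nat_div)
  have "2 * (real d + 1) \<le> sqrt k * (real d + 1)"
    using d(2) by (intro mult_right_mono) simp_all
  also have "sqrt k * (real d + 1) \<le> sqrt k * (sqrt k / 2)"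
    using d(2) by (intro mult_left_mono) simp_all
  also have "\<dots> = h" by (simp add: h)
  finally have "2 * (real d + 1) \<le> h" .
  then have "real (d + 1) \<le> real h" by simp
  then have dh: "d + 1 \<le> h" by (simp only: of_nat_le_iff)
  have "sqrt k * (real d + 1) \<le> h"
    using d(2) mult_left_mono[of "real d + 1" "sqrt k / 2" "sqrt k"] by (simp add: h)
  then have sqrt_q: "sqrt k \<le> q"
    by (simp add: q_def field_simps)
  then have "0 < k choose h" by (simp add: h_def)
  then have a: "0 < a" and q: "0 < q" using dh by (simp_all add: a_def q_def)
  have "(a * q) ^ n \<le> 2 ^ B * ((2 * a) ^ n * q ^ (m * k))"
    using card_inputs_le_short_tapes[OF k d(1) dh[unfolded h_def] adv]
    by (simp add: card_rounds a_def q_def h_def)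
  also have "\<dots> = (a ^ n * q ^ (m * k)) * 2 ^ (B + n)"
    by (simp add: power_add power_mult_distrib)
  finally have "(a ^ n * q ^ (m * k)) * q ^ (n - m * k) \<le> (a ^ n * q ^ (m * k)) * 2 ^ (B + n)"
    using mk by (simp add: power_mult_distrib mult.assoc flip: power_add)
  then have "q ^ (n - m * k) \<le> 2 ^ (B + n)"
    using a q by (simp add: mult_le_cancel_left_pos)
  then show ?thesis
    using sqrt_q power_mono[OF sqrt_q, of "n - m * k"] by simp
qed

lemma ln_bound_of_sqrt_power_le:
  assumes "1 \<le> k" "2 * m * k \<le> n" "sqrt k ^ (n - m * k) \<le> 2 ^ (B + n)"
  shows "real n * ln k \<le> 4 * (real B + real n)"
proof -
  have "ln (sqrt k ^ (n - m * k)) \<le> ln (2 ^ (B + n))"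
    using assms(1,3) by simp
  then have "real (n - m * k) * (ln k / 2) \<le> real (B + n) * ln 2"
    using assms(1) by (simp add: ln_realpow ln_sqrt)
  moreover have "n \<le> 2 * (n - m * k)"
    using assms(2) by (simp only: mult.assoc)
  then have "real n / 2 * (ln k / 2) \<le> real (n - m * k) * (ln k / 2)"
    using assms(1) by (intro mult_right_mono) simp_all
  moreover have "real (B + n) * ln 2 \<le> B + n"
    using ln_2_less_1 by (intro mult_left_le) simp_all
  ultimately show ?thesis by simp
qed

lemma exists_input_reading_many_bits:
  fixes c k n m :: nat
  assumes c: "1 \<le> c" and k: "even k" "n = k ^ c"
    and m: "2 * m * k \<le> n" and d: "2 * (real (ceillog2 n) + 1) \<le> sqrt k" and ln_k: "11 \<le> ln k"
    and cost: "\<And>As xs. hsgg_input k n As xs \<Longrightarrow>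
      hsgg_valid_output n As xs (hsgg_run ALG (adv k n As xs) k n As xs) \<and>
      hsgg_cost (hsgg_run ALG (adv k n As xs) k n As xs) \<le> m"
  shows "\<exists>As xs. hsgg_input k n As xs \<and>
           (\<forall>b. hsgg_determined_by ALG (adv k n As xs) b k n As xs \<longrightarrow>
                1 / (16 * real c) * n * ln n \<le> b)"
proof (rule ccontr)
  define x where "x = 1 / (16 * real c) * n * ln n"
  define B where "B = nat \<lceil>x\<rceil>"
  assume neg: "\<not> ?thesis"
  have "hsgg_determined_by ALG (adv k n As xs) B k n As xs"
    if input: "hsgg_input k n As xs" for As xs
  proof -
    obtain b where "hsgg_determined_by ALG (adv k n As xs) b k n As xs" "real b < x"
      using neg input by (auto simp: not_le x_def)
    moreover have "b \<le> B" using \<open>real b < x\<close> by (simp add: B_def le_nat_iff le_ceiling_iff)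
    ultimately show ?thesis by (meson hsgg_determined_by_mono)
  qed
  with cost have adv: "solves_with_advice ALG adv k n m B"
    by (simp add: solves_with_advice_def)
  have "1 \<le> k" using ln_k by (cases k) auto
  then have "k \<le> n" "0 < n" using c k(2) by (simp_all add: self_le_power)
  have mk: "m * k \<le> n" using m by (simp only: mult.assoc)
  have "m * (k div 2) \<le> m * k" by (simp add: div_le_dividend)
  also have "\<dots> \<le> n" by (rule mk)
  also have "n \<le> 2 ^ ceillog2 n" using \<open>0 < n\<close> ceillog2_le_iff by blast
  finally have "sqrt k ^ (n - m * k) \<le> 2 ^ (B + n)"
    by (rule sqrt_power_le_advice[OF k(1) \<open>k \<le> n\<close> mk _ d adv])
  then have "real n * ln k \<le> 4 * (real B + real n)"
    using \<open>1 \<le> k\<close> m by (intro ln_bound_of_sqrt_power_le) simp_all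
  moreover have "real B \<le> real n * ln k / 16 + 1"
  proof -
    have "x = real n * ln k / 16" using c \<open>1 \<le> k\<close> by (simp add: x_def k(2) ln_realpow)
    moreover have "0 \<le> x" using \<open>0 < n\<close> by (simp add: x_def)
    then have "real B = of_int \<lceil>x\<rceil>" by (simp add: B_def)
    ultimately show ?thesis using of_int_ceiling_le_add_one[of x] by linarith
  qed
  moreover have "real n * 11 \<le> real n * ln k" using ln_k by (intro mult_left_mono) simp_all
  ultimately show False using \<open>0 < n\<close> by simp
qed

section \<open>Asymptotics\<close>

lemma eventually_twice_cost_le:
  fixes c :: nat and \<delta> C :: real
  assumes "1 < real c * \<delta>"
  shows "\<forall>\<^sub>F k in sequentially. 2 * nat \<lfloor>C * real (k ^ c) powr (1 - \<delta>)\<rfloor> * k \<le> k ^ c"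
proof -
  define e where "e = real c * \<delta> - 1"
  have "- e < 0" using assms by (simp add: e_def)
  have "((\<lambda>k. 2 * C * real k powr (- e)) \<longlongrightarrow> 0) sequentially"
    using tendsto_neg_powr[OF \<open>- e < 0\<close> filterlim_real_sequentially]
    by (rule tendsto_mult_right_zero)
  then have "\<forall>\<^sub>F k in sequentially. 2 * C * real k powr (- e) < 1"
    by (rule order_tendstoD) simp
  then show ?thesis
    using eventually_gt_at_top[of "0 :: nat"]
  proof eventually_elim
    case (elim k)
    define m where "m = nat \<lfloor>C * real (k ^ c) powr (1 - \<delta>)\<rfloor>"
    have "real (k ^ c) powr (1 - \<delta>) * real k = real k powr (real c * (1 - \<delta>) + 1)"
      using elim(2) by (simp add: powr_realpow[symmetric] powr_powr powr_add)
    also have "\<dots> = real k powr (- e + real c)" by (simp add: e_def algebra_simps)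
    also have "\<dots> = real k powr (- e) * real (k ^ c)"
      using elim(2) by (subst powr_add) (simp add: powr_realpow)
    finally have n: "real (k ^ c) powr (1 - \<delta>) * real k = real k powr (- e) * real (k ^ c)" .
    have "real (2 * m * k) \<le> real (k ^ c)"
    proof (cases "C * real (k ^ c) powr (1 - \<delta>) \<le> 0")
      case False
      then have "real m \<le> C * real (k ^ c) powr (1 - \<delta>)" by (simp add: m_def)
      then have "real m * (2 * real k) \<le> C * real (k ^ c) powr (1 - \<delta>) * (2 * real k)"
        by (rule mult_right_mono) simp
      then have "real (2 * m * k) \<le> 2 * C * (real (k ^ c) powr (1 - \<delta>) * real k)"
        by (simp add: ac_simps)
      also have "\<dots> = 2 * C * real k powr (- e) * real (k ^ c)" by (simp only: n mult.assoc)
      also have "\<dots> \<le> real (k ^ c)"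
        using elim(1) mult_right_mono[of "2 * C * real k powr (- e)" 1 "real (k ^ c)"] by simp
      finally show ?thesis .
    qed (simp add: m_def)
    then show ?case by (simp only: of_nat_le_iff m_def)
  qed
qed

lemma eventually_ceillog2_le_sqrt:
  "\<forall>\<^sub>F k in sequentially. 2 * (real (ceillog2 (k ^ c)) + 1) \<le> sqrt k"
proof -
  have "\<forall>\<^sub>F k in sequentially. 2 * (real c * log 2 k + 2) \<le> sqrt k"
    by real_asymp
  then show ?thesis
    using eventually_gt_at_top[of "0 :: nat"]
  proof eventually_elim
    case (elim k)
    have "real (ceillog2 (k ^ c)) < log 2 (real (k ^ c)) + 1"
      using elim(2) by (intro ceillog2_less_log) simp
    also have "log 2 (real (k ^ c)) = real c * log 2 k"
      using elim(2) by (simp add: log_nat_power)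
    finally show ?case using elim(1) by (simp add: algebra_simps)
  qed
qed

theorem theorem14:
  fixes c :: nat and \<delta> :: real and ALG :: hsgg_alg and adv :: hsgg_oracle
  assumes "c \<ge> 1"
    and "\<delta> > 1 / real c"
    and "\<exists>C N. \<forall>k n As xs. n = k ^ c \<and> n \<ge> N \<and> hsgg_input k n As xs \<longrightarrow>
            hsgg_valid_output n As xs (hsgg_run ALG (adv k n As xs) k n As xs) \<and>
            real (hsgg_cost (hsgg_run ALG (adv k n As xs) k n As xs)) \<le> C * real n powr (1 - \<delta>)"
  shows "\<exists>\<epsilon>>0. \<exists>N. \<forall>k n. even k \<and> n = k ^ c \<and> n \<ge> N \<longrightarrow>
            (\<exists>As xs. hsgg_input k n As xs \<and>
               (\<forall>b. hsgg_determined_by ALG (adv k n As xs) b k n As xs \<longrightarrow>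
                    real b \<ge> \<epsilon> * real n * ln (real n)))"
proof -
  obtain C N0 where cost: "\<forall>k n As xs. n = k ^ c \<and> n \<ge> N0 \<and> hsgg_input k n As xs \<longrightarrow>
      hsgg_valid_output n As xs (hsgg_run ALG (adv k n As xs) k n As xs) \<and>
      real (hsgg_cost (hsgg_run ALG (adv k n As xs) k n As xs)) \<le> C * real n powr (1 - \<delta>)"
    using assms(3) by blast
  have "1 < real c * \<delta>" using assms(1,2) by (simp add: field_simps)
  then have "\<forall>\<^sub>F k in sequentially. 2 * nat \<lfloor>C * real (k ^ c) powr (1 - \<delta>)\<rfloor> * k \<le> k ^ c \<and>
      2 * (real (ceillog2 (k ^ c)) + 1) \<le> sqrt k \<and> 11 \<le> ln (real k)"
    using eventually_ceillog2_le_sqrt[of c]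
    by (intro eventually_conj eventually_twice_cost_le) (simp_all, real_asymp)
  then obtain K where large: "\<And>k. K \<le> k \<Longrightarrow> 2 * nat \<lfloor>C * real (k ^ c) powr (1 - \<delta>)\<rfloor> * k \<le> k ^ c \<and>
      2 * (real (ceillog2 (k ^ c)) + 1) \<le> sqrt k \<and> 11 \<le> ln (real k)"
    unfolding eventually_sequentially by blast
  show ?thesis
  proof (intro exI[of _ "1 / (16 * real c)"] conjI exI[of _ "max N0 (K ^ c)"] allI impI)
    show "0 < 1 / (16 * real c)" using assms(1) by simp
    fix k n assume kn: "even k \<and> n = k ^ c \<and> max N0 (K ^ c) \<le> n"
    then have "K ^ c \<le> k ^ c" by simp
    then have "K \<le> k" using assms(1) by (simp add: power_mono_iff)
    show "\<exists>As xs. hsgg_input k n As xs \<and>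
        (\<forall>b. hsgg_determined_by ALG (adv k n As xs) b k n As xs \<longrightarrow> 1 / (16 * real c) * n * ln n \<le> b)"
      by (rule exists_input_reading_many_bits[OF assms(1),
            where m = "nat \<lfloor>C * real n powr (1 - \<delta>)\<rfloor>"])
        (use cost kn large[OF \<open>K \<le> k\<close>] in \<open>auto intro: le_nat_floor\<close>)
  qed
qed

end
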